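(* For every base $\mathscr{B}$ and every IPL formula $\theta$: $\Vdash^{*}_{\mathscr{B}}\theta$ if and only if $\Vdash_{\mathscr{B}}\theta$.
   Context: Fix a denumerable set $\mathbb{A}$ of atoms. IPL formulas are built from atoms and $\bot$ using $\wedge,\vee,\to$. An atomic rule has the form $(Q_1\triangleright q_1,\dots,Q_n\triangleright q_n)\Rightarrow q$ with $n\ge 0$, $q,q_i\in\mathbb{A}$ and $Q_i$ finite (possibly empty) sets of atoms. A base is a set of atomic rules. Derivability $\vdash_{\mathscr{B}}$ is the least relation such that $S\cup\{q\}\vdash_{\mathscr{B}} q$, and if $(Q_1\triangleright q_1,\dots,Q_n\triangleright q_n)\Rightarrow q\in\mathscr{B}$ and $S\cup Q_i\vdash_{\mathscr{B}} q_i$ for all $i$, then $S\vdash_{\mathscr{B}} q$. Sandqvist's support $\Vdash_{\mathscr{B}}$ is defined inductively by: (At) $\Vdash_{\mathscr{B}} p$ iff $\emptyset\vdash_{\mathscr{B}} p$; ($\to$) $\Vdash_{\mathscr{B}}\varphi\to\psi$ iff $\varphi\Vdash_{\mathscr{B}}\psi$; ($\wedge$) $\Vdash_{\mathscr{B}}\varphi\wedge\psi$ iff $\Vdash_{\mathscr{B}}\varphi$ and $\Vdash_{\mathscr{B}}\psi$; ($\vee$) $\Vdash_{\mathscr{B}}\varphi\vee\psi$ iff for every $\mathscr{C}\supseteq\mathscr{B}$ and atom $p$, if $\varphi\Vdash_{\mathscr{C}}p$ and $\psi\Vdash_{\mathscr{C}}p$ then $\Vdash_{\mathscr{C}}p$;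 ($\bot$) $\Vdash_{\mathscr{B}}\bot$ iff $\Vdash_{\mathscr{B}}p$ for all atoms $p$; (Inf) for nonempty finite $\Gamma$, $\Gamma\Vdash_{\mathscr{B}}\varphi$ iff for every $\mathscr{C}\supseteq\mathscr{B}$, if $\Vdash_{\mathscr{C}}\psi$ for all $\psi\in\Gamma$ then $\Vdash_{\mathscr{C}}\varphi$. The relation $\Vdash^{*}_{\mathscr{B}}$ is defined by the same clauses except that ($\wedge$) is replaced by ($\wedge^*$): $\Vdash^{*}_{\mathscr{B}}\varphi\wedge\psi$ iff for every $\mathscr{C}\supseteq\mathscr{B}$ and every atom $p$, if $\varphi,\psi\Vdash^{*}_{\mathscr{C}}p$ then $\Vdash^{*}_{\mathscr{C}}p$. *)

theory Defs
  imports Main "HOL-Library.FSet"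
begin

type_synonym atom = nat

datatype form = Atom atom | Bot | Conj form form | Disj form form | Imp form form

text \<open>An atomic rule (Q_1 |> q_1, ..., Q_n |> q_n) => q is represented as the pair
  ([(Q_1,q_1),...,(Q_n,q_n)], q), with each Q_i a finite set of atoms.\<close>
type_synonym rule = "(atom fset \<times> atom) list \<times> atom"
type_synonym base = "rule set"

inductive derives :: "base \<Rightarrow> atom set \<Rightarrow> atom \<Rightarrow> bool" where
  ax: "q \<in> S \<Longrightarrow> derives B S q"
| app: "(prems, q) \<in> B \<Longrightarrow> (\<forall>(Q, qi) \<in> set prems. derives B (S \<union> fset Q) qi)
        \<Longrightarrow> derives B S q"

text \<open>Sandqvist's support: supp phi B means  |-_B phi.  For a single premise,
  (Inf) reads: phi |-_B psi iff for all C \<supseteq> B, supp phi C implies supp psi C.\<close>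
primrec supp :: "form \<Rightarrow> base \<Rightarrow> bool" where
  "supp (Atom p) B = derives B {} p"
| "supp Bot B = (\<forall>p. derives B {} p)"
| "supp (Conj a b) B = (supp a B \<and> supp b B)"
| "supp (Disj a b) B =
     (\<forall>C p. B \<subseteq> C \<longrightarrow>
        (\<forall>D. C \<subseteq> D \<longrightarrow> supp a D \<longrightarrow> derives D {} p) \<longrightarrow>
        (\<forall>D. C \<subseteq> D \<longrightarrow> supp b D \<longrightarrow> derives D {} p) \<longrightarrow>
        derives C {} p)"
| "supp (Imp a b) B = (\<forall>C. B \<subseteq> C \<longrightarrow> supp a C \<longrightarrow> supp b C)"

text \<open>The variant with the clause (and*): phi,psi |-*_C p is the (Inf) clause with
  Gamma = {phi, psi}.\<close>
primrec supp_star :: "form \<Rightarrow> base \<Rightarrow> bool" where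
  "supp_star (Atom p) B = derives B {} p"
| "supp_star Bot B = (\<forall>p. derives B {} p)"
| "supp_star (Conj a b) B =
     (\<forall>C p. B \<subseteq> C \<longrightarrow>
        (\<forall>D. C \<subseteq> D \<longrightarrow> supp_star a D \<longrightarrow> supp_star b D \<longrightarrow> derives D {} p) \<longrightarrow>
        derives C {} p)"
| "supp_star (Disj a b) B =
     (\<forall>C p. B \<subseteq> C \<longrightarrow>
        (\<forall>D. C \<subseteq> D \<longrightarrow> supp_star a D \<longrightarrow> derives D {} p) \<longrightarrow>
        (\<forall>D. C \<subseteq> D \<longrightarrow> supp_star b D \<longrightarrow> derives D {} p) \<longrightarrow>
        derives C {} p)"
| "supp_star (Imp a b) B = (\<forall>C. B \<subseteq> C \<longrightarrow> supp_star a C \<longrightarrow> supp_star b C)"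

end

theory Submission
  imports Defs
begin

text \<open>Every formula satisfies the atomic elimination property: \<open>\<Vdash>\<^sub>B \<phi>\<close> holds as soon as
  every atom that follows from \<open>\<phi>\<close> in all extensions \<open>C \<supseteq> B\<close> is derivable in \<open>C\<close>.
  The clause (\<open>\<and>\<^sup>*\<close>) is exactly this property for \<open>\<phi> \<and> \<psi>\<close>, read through the induction
  hypothesis, so it agrees with (\<open>\<and>\<close>); all other clauses coincide literally.\<close>

definition atom_elim :: "(base \<Rightarrow> bool) \<Rightarrow> base \<Rightarrow> bool" where
  "atom_elim P B \<longleftrightarrow>
     (\<forall>C p. B \<subseteq> C \<longrightarrow> (\<forall>D. C \<subseteq> D \<longrightarrow> P D \<longrightarrow> derives D {} p) \<longrightarrow> derives C {} p)"

lemma derives_mono: "derives B S p \<Longrightarrow> B \<subseteq> C \<Longrightarrow> derives C S p"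
  by (induction rule: derives.induct) (auto intro: derives.intros)

lemma supp_mono: "supp \<phi> B \<Longrightarrow> B \<subseteq> C \<Longrightarrow> supp \<phi> C"
proof (induction \<phi> arbitrary: B C)
  case (Disj a b)
  show ?case unfolding supp.simps
  proof (intro allI impI)
    fix D p
    assume "C \<subseteq> D"
      and "\<forall>E. D \<subseteq> E \<longrightarrow> supp a E \<longrightarrow> derives E {} p"
      and "\<forall>E. D \<subseteq> E \<longrightarrow> supp b E \<longrightarrow> derives E {} p"
    moreover have "B \<subseteq> D" using Disj.prems(2) \<open>C \<subseteq> D\<close> by (rule order_trans)
    ultimately show "derives D {} p" using Disj.prems(1) unfolding supp.simps by blast
  qed
next
  case (Imp a b)
  show ?case unfolding supp.simps
  proof (intro allI impI)
    fix D assume "C \<subseteq> D" and "supp a D"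
    moreover have "B \<subseteq> D" using Imp.prems(2) \<open>C \<subseteq> D\<close> by (rule order_trans)
    ultimately show "supp b D" using Imp.prems(1) unfolding supp.simps by blast
  qed
qed (auto intro: derives_mono)

lemma atom_elimI:
  assumes "P B" and "\<And>C D. C \<subseteq> D \<Longrightarrow> P C \<Longrightarrow> P D"
  shows "atom_elim P B"
  using assms unfolding atom_elim_def by blast

lemma atom_elim_weaken:
  assumes "atom_elim P B" and "B \<subseteq> C" and "\<And>D. C \<subseteq> D \<Longrightarrow> P D \<Longrightarrow> Q D"
  shows "atom_elim Q C"
  unfolding atom_elim_def
proof (intro allI impI)
  fix E p
  assume "C \<subseteq> E" and "\<forall>D. E \<subseteq> D \<longrightarrow> Q D \<longrightarrow> derives D {} p"
  then have "\<forall>D. E \<subseteq> D \<longrightarrow> P D \<longrightarrow> derives D {} p"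
    using assms(3) by (blast dest: order_trans)
  moreover have "B \<subseteq> E" using assms(2) \<open>C \<subseteq> E\<close> by (rule order_trans)
  ultimately show "derives E {} p" using assms(1) unfolding atom_elim_def by blast
qed

lemma supp_if_atom_elim: "atom_elim (supp \<phi>) B \<Longrightarrow> supp \<phi> B"
proof (induction \<phi> arbitrary: B)
  case (Atom x)
  show ?case
    using Atom.prems[unfolded atom_elim_def, rule_format, of B x] by simp
next
  case Bot
  show ?case
  proof (simp, intro allI)
    fix p
    show "derives B {} p"
      using Bot.prems[unfolded atom_elim_def, rule_format, of B p] by simp
  qed
next
  case (Conj a b)
  have "atom_elim (supp a) B" "atom_elim (supp b) B"
    using atom_elim_weaken[OF Conj.prems order_refl] by auto
  then show ?case using Conj.IH by simp
next
  case (Disj a b)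
  show ?case unfolding supp.simps
  proof (intro allI impI)
    fix C p
    assume "B \<subseteq> C"
      and Ha: "\<forall>D. C \<subseteq> D \<longrightarrow> supp a D \<longrightarrow> derives D {} p"
      and Hb: "\<forall>D. C \<subseteq> D \<longrightarrow> supp b D \<longrightarrow> derives D {} p"
    have "derives D {} p" if "C \<subseteq> D" and "supp (Disj a b) D" for D
    proof -
      have "\<forall>E. D \<subseteq> E \<longrightarrow> supp a E \<longrightarrow> derives E {} p"
        using Ha \<open>C \<subseteq> D\<close> by (blast dest: order_trans)
      moreover have "\<forall>E. D \<subseteq> E \<longrightarrow> supp b E \<longrightarrow> derives E {} p"
        using Hb \<open>C \<subseteq> D\<close> by (blast dest: order_trans)
      ultimately show ?thesis
        using \<open>supp (Disj a b) D\<close>[unfolded supp.simps, rule_format, OF order_refl] by blast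
    qed
    then show "derives C {} p"
      using Disj.prems[unfolded atom_elim_def, rule_format, OF \<open>B \<subseteq> C\<close>] by blast
  qed
next
  case (Imp a b)
  show ?case unfolding supp.simps
  proof (intro allI impI)
    fix C
    assume "B \<subseteq> C" and "supp a C"
    have "atom_elim (supp b) C"
    proof (rule atom_elim_weaken[OF Imp.prems \<open>B \<subseteq> C\<close>])
      fix D assume "C \<subseteq> D" and "supp (Imp a b) D"
      moreover have "supp a D" using \<open>supp a C\<close> \<open>C \<subseteq> D\<close> by (rule supp_mono)
      ultimately show "supp b D" by simp
    qed
    then show "supp b C" by (rule Imp.IH(2))
  qed
qed

lemma supp_iff_atom_elim: "supp \<phi> B \<longleftrightarrow> atom_elim (supp \<phi>) B"
proof
  show "supp \<phi> B \<Longrightarrow> atom_elim (supp \<phi>) B"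
    by (metis atom_elimI supp_mono)
qed (rule supp_if_atom_elim)

theorem mainTheorem2:
  fixes B :: base and \<theta> :: form
  shows "supp_star \<theta> B \<longleftrightarrow> supp \<theta> B"
proof (induction \<theta> arbitrary: B)
  case (Conj a b)
  have "supp (Conj a b) = (\<lambda>D. supp a D \<and> supp b D)"
    by auto
  then have "supp (Conj a b) B \<longleftrightarrow> atom_elim (\<lambda>D. supp a D \<and> supp b D) B"
    by (metis supp_iff_atom_elim)
  also have "\<dots> \<longleftrightarrow> supp_star (Conj a b) B"
    using Conj.IH by (simp add: atom_elim_def imp_conjL)
  finally show ?case ..
qed simp_all

end
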